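(* Let $f$ and $g>0$ be functions on $(0,\infty)$ such that $\mathcal{F}(x)=\int_0^\infty f(t)(t+1)^{-x}\,dt$ and $\mathcal{G}(x)=\int_0^\infty g(t)(t+1)^{-x}\,dt$ exist for all $x\in(0,\infty)$. If there exists $t^*\in(0,\infty)$ such that $t\mapsto f(t)/g(t)$ is increasing (resp. decreasing) on $(0,t^* )$ and decreasing (resp. increasing) on $(t^*,\infty)$, then (i) $x\mapsto\mathcal{F}(x)/\mathcal{G}(x)$ is decreasing (resp. increasing) on $(0,\infty)$ if and only if $H_{\mathcal{F},\mathcal{G}}(0^+)\ge0$ (resp. $\le0$); (ii) if $H_{\mathcal{F},\mathcal{G}}(0^+)<0$ (resp. $>0$), there exists $x^*>0$ such that $x\mapsto\mathcal{F}(x)/\mathcal{G}(x)$ is increasing (resp. decreasing) on $(0,x^* )$ and decreasing (resp. increasing) on $(x^*,\infty)$.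
   Context: For differentiable $F,G$ with $G\ne0$, $G'\neq0$, $H_{F,G}=\frac{F'}{G'}G-F$, and $H_{F,G}(0^+)=\lim_{x\to0^+}H_{F,G}(x)$. *)

theory Defs
  imports "HOL-Analysis.Analysis"
begin

definition H_fun :: "(real \<Rightarrow> real) \<Rightarrow> (real \<Rightarrow> real) \<Rightarrow> real \<Rightarrow> real" where
  "H_fun F G x = deriv F x / deriv G x * G x - F x"

definition transf :: "(real \<Rightarrow> real) \<Rightarrow> real \<Rightarrow> real" where
  "transf f x = (LINT t:{0<..}|lborel. f t * (t + 1) powr (- x))"

end

theory Submission
  imports Defs
begin

(*
  Write F, G for the transforms of f, g and R = F / G. Differentiating under the integral,
  F' is minus the transform of f(t) ln(t + 1), and R' = G' H / G^2 with G' < 0, so R' and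
  H = H_{F,G} have opposite signs.

  At a critical point x0 of R with value c, the function h = f - c g has vanishing moments
  against 1 and ln(t + 1) with respect to (t + 1)^(-x0) dt. As f/g is unimodal, h = g (f/g - c)
  has sign pattern (-, +, -); pairing h with (t + 1)^(x0 - x) minus its chord in the variable
  ln(t + 1), which has the opposite pattern, gives F(x) < c G(x) for all x /= x0. So every
  critical point of R is a strict global maximum, and R is either decreasing or increasing then
  decreasing; it is never increasing, since R(x) approaches the values of f/g near 0 as x grows.

  Finally H' = (F'/G')' G, and F'/G' is the quotient of the transforms of f ln(t + 1) and
  g ln(t + 1), whose ratio is again f/g. Its shape forces H(0+) < 0 whenever R first increases,
  which separates the two alternatives. The "resp." half follows by replacing f with -f.
*)

lemma abs_exp_minus_one_minus_le:
  fixes y :: real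
  shows "\<bar>exp y - 1 - y\<bar> \<le> y\<^sup>2 * exp \<bar>y\<bar>"
proof -
  have lower: "0 \<le> exp y - 1 - y" using exp_ge_add_one_self[of y] by linarith
  have "exp y * (1 - y) \<le> exp y * exp (- y)"
    using exp_ge_add_one_self[of "- y"] by (intro mult_left_mono) simp_all
  then have upper: "exp y - 1 - y \<le> y * (exp y - 1)" by (simp add: exp_minus algebra_simps)
  show ?thesis
  proof (cases "0 \<le> y")
    case True
    have "y * (exp y - 1) \<le> y * (y * exp y)"
      using \<open>exp y * (1 - y) \<le> exp y * exp (- y)\<close> True
      by (intro mult_left_mono) (simp_all add: exp_minus algebra_simps)
    with lower upper True show ?thesis by (simp add: power2_eq_square)
  next
    case False
    have "y * (exp y - 1) = (- y) * (1 - exp y)" by (simp add: algebra_simps)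
    also have "\<dots> \<le> (- y) * (- y)"
      using False exp_ge_add_one_self[of y] by (intro mult_left_mono) linarith+
    also have "\<dots> \<le> (- y) * (- y) * exp \<bar>y\<bar>"
      using mult_left_mono[of 1 "exp \<bar>y\<bar>" "(- y) * (- y)"] by simp
    finally show ?thesis using lower upper by (simp add: power2_eq_square)
  qed
qed

lemma powr_second_order_bound:
  fixes t h x :: real
  assumes t: "0 < t" and h: "\<bar>h\<bar> \<le> x / 2"
  shows "\<bar>(t + 1) powr (- (x + h)) - (t + 1) powr (- x) + h * ln (t + 1) * (t + 1) powr (- x)\<bar>
          \<le> h\<^sup>2 * (ln (t + 1))\<^sup>2 * (t + 1) powr (- (x / 2))"
proof -
  define u where "u = ln (t + 1)"
  have u: "0 \<le> u" using t by (simp add: u_def)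
  have w: "(t + 1) powr a = exp (a * u)" for a using t by (simp add: u_def powr_def)
  have "exp (- (x + h) * u) = exp (- x * u) * exp (- h * u)"
    by (simp flip: exp_add add: algebra_simps)
  then have "\<bar>(t + 1) powr (- (x + h)) - (t + 1) powr (- x) + h * u * (t + 1) powr (- x)\<bar>
      = \<bar>exp (- x * u) * (exp (- h * u) - 1 - (- h * u))\<bar>"
    unfolding w by (simp add: algebra_simps)
  also have "\<dots> = exp (- x * u) * \<bar>exp (- h * u) - 1 - (- h * u)\<bar>"
    by (simp add: abs_mult)
  also have "\<dots> \<le> exp (- x * u) * ((- h * u)\<^sup>2 * exp \<bar>- h * u\<bar>)"
    by (intro mult_left_mono abs_exp_minus_one_minus_le) simp
  also have "\<dots> = h\<^sup>2 * u\<^sup>2 * exp (- x * u + \<bar>h\<bar> * u)"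
    using u by (simp add: mult_exp_exp abs_mult power_mult_distrib)
  also have "\<dots> \<le> h\<^sup>2 * u\<^sup>2 * exp (- (x / 2) * u)"
    using mult_right_mono[OF h u] by (intro mult_left_mono) simp_all
  finally show ?thesis unfolding w u_def .
qed

lemma ln_mult_powr_le:
  fixes t y :: real
  assumes t: "0 < t" and y: "0 < y"
  shows "ln (t + 1) * (t + 1) powr (- y) \<le> 2 / y * (t + 1) powr (- (y / 2))"
proof -
  have "ln (t + 1) \<le> (t + 1) powr (y / 2) / (y / 2)" using ln_powr_bound[of "t + 1" "y / 2"] t y by simp
  then have "ln (t + 1) * (t + 1) powr (- y) \<le> (t + 1) powr (y / 2) / (y / 2) * (t + 1) powr (- y)"
    by (rule mult_right_mono) simp
  also have "\<dots> = 2 / y * ((t + 1) powr (y / 2) * (t + 1) powr (- y))"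
    by simp
  also have "(t + 1) powr (y / 2) * (t + 1) powr (- y) = (t + 1) powr (- (y / 2))"
    by (subst powr_add[symmetric]) simp
  finally show ?thesis .
qed

text \<open>Strict convexity of \<open>u \<mapsto> exp (s * u)\<close>: slopes of adjacent chords increase.\<close>

lemma exp_slope_cross:
  fixes s a b c :: real
  assumes s: "s \<noteq> 0" and abc: "a < b" "b < c"
  shows "(exp (s * b) - exp (s * a)) * (c - b) < (exp (s * c) - exp (s * b)) * (b - a)"
proof -
  have "1 - s * (b - a) < exp (- (s * (b - a)))" using s abc by (simp add: exp_minus_greater)
  then have "exp (s * b) * (1 - s * (b - a)) < exp (s * b) * exp (- (s * (b - a)))" by simp
  then have left: "exp (s * b) - exp (s * a) < s * (b - a) * exp (s * b)"
    by (simp add: algebra_simps flip: exp_add)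
  have "1 + s * (c - b) < exp (s * (c - b))"
    using exp_minus_greater[of "- (s * (c - b))"] s abc by simp
  then have "exp (s * b) * (1 + s * (c - b)) < exp (s * b) * exp (s * (c - b))" by simp
  then have right: "s * (c - b) * exp (s * b) < exp (s * c) - exp (s * b)"
    by (simp add: algebra_simps flip: exp_add)
  have "(exp (s * b) - exp (s * a)) * (c - b) < (s * (b - a) * exp (s * b)) * (c - b)"
    using left abc by (intro mult_strict_right_mono) auto
  also have "\<dots> = (s * (c - b) * exp (s * b)) * (b - a)" by (simp add: algebra_simps)
  also have "\<dots> < (exp (s * c) - exp (s * b)) * (b - a)"
    using right abc by (intro mult_strict_right_mono) auto
  finally show ?thesis .
qed

lemma exp_chord_sign:
  fixes s u1 u2 :: real
  defines "\<kappa> \<equiv> \<lambda>u. (exp (s * u) - exp (s * u1)) * (u2 - u1) - (exp (s * u2) - exp (s * u1)) * (u - u1)"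
  assumes s: "s \<noteq> 0" and u12: "u1 < u2"
  shows "u < u1 \<Longrightarrow> 0 < \<kappa> u"
    and "u1 < u \<Longrightarrow> u < u2 \<Longrightarrow> \<kappa> u < 0"
    and "u2 < u \<Longrightarrow> 0 < \<kappa> u"
  using exp_slope_cross[OF s _ u12, of u] exp_slope_cross[OF s, of u1 u u2]
    exp_slope_cross[OF s u12, of u]
  by (auto simp: \<kappa>_def algebra_simps)

lemma strict_mono_on_crossing:
  fixes \<phi> :: "real \<Rightarrow> real"
  assumes mono: "strict_mono_on {a<..<b} \<phi>" and ab: "a \<le> b"
  obtains p where "a \<le> p" "p \<le> b" "\<And>t. a < t \<Longrightarrow> t < p \<Longrightarrow> \<phi> t < c"
    "\<And>t. p < t \<Longrightarrow> t < b \<Longrightarrow> c < \<phi> t"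
proof
  define S where "S = {t \<in> {a<..<b}. \<phi> t < c}"
  define p where "p = Sup (insert a S)"
  have bdd: "bdd_above (insert a S)" unfolding S_def using ab by (intro bdd_aboveI[of _ b]) auto
  show ap: "a \<le> p" unfolding p_def by (rule cSup_upper[OF _ bdd]) simp
  show "p \<le> b" unfolding p_def by (rule cSup_least) (use ab in \<open>auto simp: S_def\<close>)
  show "\<phi> t < c" if t: "a < t" "t < p" for t
  proof -
    obtain s where "s \<in> insert a S" "t < s" using less_cSup_iff[OF _ bdd] t(2) unfolding p_def by blast
    with t(1) have s: "s \<in> S" "t < s" by auto
    then have "\<phi> t < \<phi> s" using t(1) by (intro strict_mono_onD[OF mono]) (auto simp: S_def)
    with s show ?thesis by (simp add: S_def)
  qed
  show "c < \<phi> t" if t: "p < t" "t < b" for t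
  proof (rule ccontr)
    assume "\<not> c < \<phi> t"
    define m where "m = (p + t) / 2"
    have m: "a < m" "m < t" using t ap by (simp_all add: m_def)
    then have "\<phi> m < \<phi> t" using t by (intro strict_mono_onD[OF mono]) auto
    with \<open>\<not> c < \<phi> t\<close> m t have "m \<in> S" by (simp add: S_def)
    then have "m \<le> p" unfolding p_def by (intro cSup_upper bdd) simp
    with t show False by (simp add: m_def)
  qed
qed

lemma strict_antimono_on_crossing:
  fixes \<phi> :: "real \<Rightarrow> real"
  assumes anti: "strict_antimono_on {a<..} \<phi>"
  obtains "\<And>t. a < t \<Longrightarrow> c < \<phi> t"
  | q where "a \<le> q" "\<And>t. a < t \<Longrightarrow> t < q \<Longrightarrow> c < \<phi> t" "\<And>t. q < t \<Longrightarrow> \<phi> t < c"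
proof -
  define Q where "Q = {t. a < t \<and> \<phi> t \<le> c}"
  have bdd: "bdd_below Q" unfolding Q_def by (intro bdd_belowI[of _ a]) auto
  consider "Q = {}" | "Q \<noteq> {}" by blast
  then show thesis
  proof cases
    case 1
    then have "c < \<phi> t" if "a < t" for t using that unfolding Q_def by auto
    then show thesis by (rule that(1))
  next
    case 2
    show thesis
    proof (rule that(2))
      show "a \<le> Inf Q" using 2 unfolding Q_def by (intro cInf_greatest) auto
      show "c < \<phi> t" if "a < t" "t < Inf Q" for t
      proof (rule ccontr)
        assume "\<not> c < \<phi> t"
        with that have "t \<in> Q" by (simp add: Q_def)
        with that(2) show False using cInf_lower[OF _ bdd, of t] by simp
      qed
      show "\<phi> t < c" if t: "Inf Q < t" for t
      proof -
        obtain s where s: "s \<in> Q" "s < t" using t unfolding cInf_less_iff[OF 2 bdd] by blast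
        then have "\<phi> t < \<phi> s" using monotone_onD[OF anti, of s t] by (simp add: Q_def)
        with s show ?thesis by (simp add: Q_def)
      qed
    qed
  qed
qed

lemma strict_mono_on_uminus_iff:
  fixes h :: "real \<Rightarrow> real"
  shows "strict_mono_on A (\<lambda>x. - h x) \<longleftrightarrow> strict_antimono_on A h"
    and "strict_antimono_on A (\<lambda>x. - h x) \<longleftrightarrow> strict_mono_on A h"
  unfolding monotone_on_def by auto

lemma strict_mono_on_imp_deriv_nonneg:
  fixes f :: "real \<Rightarrow> real"
  assumes "strict_mono_on A f" "(f has_real_derivative D) (at x)" "x \<in> interior A"
  shows "0 \<le> D"
  using mono_on_imp_deriv_nonneg[OF strict_mono_on_imp_mono_on] assms by blast

lemma strict_antimono_on_imp_deriv_nonpos: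
  fixes f :: "real \<Rightarrow> real"
  assumes anti: "strict_antimono_on A f" and D: "(f has_real_derivative D) (at x)" and x: "x \<in> interior A"
  shows "D \<le> 0"
proof -
  have "mono_on A (\<lambda>x. - f x)" using anti by (auto simp: monotone_on_def less_eq_real_def)
  from mono_on_imp_deriv_nonneg[OF this DERIV_minus[OF D] x] show ?thesis by simp
qed

lemma strict_mono_or_antimono_of_deriv_nonzero:
  fixes R R' :: "real \<Rightarrow> real"
  assumes S: "is_interval S" and deriv: "\<And>x. x \<in> S \<Longrightarrow> (R has_real_derivative R' x) (at x)"
    and nonzero: "\<And>x. x \<in> interior S \<Longrightarrow> R' x \<noteq> 0"
  shows "strict_mono_on S R \<or> strict_antimono_on S R"
proof -
  have cont: "continuous_on S R"
    using deriv by (intro DERIV_continuous_on[of _ _ R']) (auto intro: has_field_derivative_at_within)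
  have "inj_on R S"
  proof (rule inj_onI, rule ccontr)
    fix a b
    assume ab: "a \<in> S" "b \<in> S" "R a = R b" "a \<noteq> b"
    define lo hi where "lo = min a b" and "hi = max a b"
    have lohi: "lo < hi" "lo \<in> S" "hi \<in> S" "R lo = R hi"
      using ab by (auto simp: lo_def hi_def min_def max_def)
    have segment: "{lo..hi} \<subseteq> S"
      using is_interval_1[THEN iffD1, OF S, rule_format, of lo hi] lohi by auto
    have "\<exists>z. lo < z \<and> z < hi \<and> (R has_real_derivative 0) (at z)"
    proof (rule Rolle[OF lohi(1,4)])
      show "continuous_on {lo..hi} R" by (rule continuous_on_subset[OF cont segment])
      show "R differentiable at x" if "lo < x" "x < hi" for x
      proof -
        have "x \<in> S" using segment that by auto
        with deriv show ?thesis unfolding real_differentiable_def by blast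
      qed
    qed
    then obtain z where z: "lo < z" "z < hi" "(R has_real_derivative 0) (at z)" by blast
    have "{lo<..<hi} \<subseteq> interior S" using segment by (intro interior_maximal) auto
    with z have "z \<in> interior S" by auto
    moreover have "R' z = 0" using segment z by (intro DERIV_unique[OF deriv z(3)]) auto
    ultimately show False using nonzero by blast
  qed
  then show ?thesis using injective_eq_monotone_map[OF S cont] by blast
qed

lemma set_integral_pos_of_pos_on_interval:
  fixes k :: "real \<Rightarrow> real"
  assumes int: "set_integrable lborel A k"
    and nonneg: "AE t in lborel. t \<in> A \<longrightarrow> 0 \<le> k t"
    and ab: "a < b" "{a<..<b} \<subseteq> A"
    and pos: "AE t in lborel. a < t \<and> t < b \<longrightarrow> 0 < k t"
  shows "0 < (LINT t:A|lborel. k t)"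
proof -
  define F where "F t = indicator A t *\<^sub>R k t" for t
  have F_int: "integrable lborel F" using int unfolding F_def set_integrable_def .
  have F_nonneg: "AE t in lborel. 0 \<le> F t"
    using nonneg by eventually_elim (auto simp: F_def indicator_def)
  have "integral\<^sup>L lborel F \<noteq> 0"
  proof
    assume "integral\<^sup>L lborel F = 0"
    then have "AE t in lborel. F t = 0"
      using integral_nonneg_eq_0_iff_AE[OF F_int F_nonneg] by simp
    with pos have "AE t in lborel. t \<notin> {a<..<b}"
      by eventually_elim (use ab in \<open>auto simp: F_def\<close>)
    then have "{a<..<b} \<in> null_sets lborel" by (subst AE_iff_null_sets) auto
    then have "emeasure lborel {a<..<b} = 0" by auto
    with ab show False by simp
  qed
  moreover have "0 \<le> integral\<^sup>L lborel F" by (rule integral_nonneg_AE[OF F_nonneg])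
  ultimately show ?thesis unfolding set_lebesgue_integral_def F_def by simp
qed

section \<open>The transform\<close>

definition transf_integrable :: "(real \<Rightarrow> real) \<Rightarrow> bool" where
  "transf_integrable k \<longleftrightarrow> (\<forall>x>0. set_integrable lborel {0<..} (\<lambda>t. k t * (t + 1) powr (- x)))"

definition ln_scaled :: "(real \<Rightarrow> real) \<Rightarrow> real \<Rightarrow> real" where
  "ln_scaled k t = k t * ln (t + 1)"

lemma transf_integrableD:
  "transf_integrable k \<Longrightarrow> 0 < x \<Longrightarrow> set_integrable lborel {0<..} (\<lambda>t. k t * (t + 1) powr (- x))"
  unfolding transf_integrable_def by blast

lemma transf_pos:
  assumes k: "transf_integrable k" and pos: "\<And>t. 0 < t \<Longrightarrow> 0 < k t" and x: "0 < x"
  shows "0 < transf k x"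
  unfolding transf_def
proof (rule set_integral_pos_of_pos_on_interval[of _ _ 0 1])
  have pos_integrand: "0 < k t * (t + 1) powr (- x)" if "0 < t" for t
    using pos[OF that] that by simp
  show "set_integrable lborel {0<..} (\<lambda>t. k t * (t + 1) powr (- x))"
    by (rule transf_integrableD[OF k x])
  show "AE t in lborel. t \<in> {0<..} \<longrightarrow> 0 \<le> k t * (t + 1) powr (- x)"
    by (rule AE_I2) (auto intro: less_imp_le pos_integrand)
  show "AE t in lborel. 0 < t \<and> t < 1 \<longrightarrow> 0 < k t * (t + 1) powr (- x)"
    by (rule AE_I2) (auto intro: pos_integrand)
qed auto

lemma transf_uminus: "transf (\<lambda>t. - k t) x = - transf k x"
  unfolding transf_def set_lebesgue_integral_def by simp

lemma
  assumes k1: "transf_integrable k1" and k2: "transf_integrable k2"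
  shows transf_integrable_lincomb: "transf_integrable (\<lambda>t. a * k1 t + b * k2 t)"
    and transf_lincomb: "0 < x \<Longrightarrow> transf (\<lambda>t. a * k1 t + b * k2 t) x = a * transf k1 x + b * transf k2 x"
proof -
  have distrib: "(\<lambda>t. (a * k1 t + b * k2 t) * (t + 1) powr (- x)) =
      (\<lambda>t. a * (k1 t * (t + 1) powr (- x)) + b * (k2 t * (t + 1) powr (- x)))" for x
    by (simp add: fun_eq_iff algebra_simps)
  show "transf_integrable (\<lambda>t. a * k1 t + b * k2 t)"
    unfolding transf_integrable_def distrib
    by (auto intro!: set_integral_add transf_integrableD[OF k1] transf_integrableD[OF k2])
  show "transf (\<lambda>t. a * k1 t + b * k2 t) x = a * transf k1 x + b * transf k2 x" if "0 < x"
    unfolding transf_def distrib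
    by (subst set_integral_add) (auto intro!: transf_integrableD[OF k1 that] transf_integrableD[OF k2 that])
qed

lemma transf_integrable_ln_scaled:
  assumes k: "transf_integrable k"
  shows "transf_integrable (ln_scaled k)"
  unfolding transf_integrable_def
proof (intro allI impI)
  fix y :: real
  assume y: "0 < y"
  have dom: "set_integrable lborel {0<..} (\<lambda>t. 2 / y * (k t * (t + 1) powr (- (y / 2))))"
    using transf_integrableD[OF k, of "y / 2"] y by simp
  have split: "ln_scaled k t * (t + 1) powr (- y) =
      k t * (t + 1) powr (- (y / 2)) * (ln (t + 1) * (t + 1) powr (- (y / 2)))" if "0 < t" for t
    using that by (simp add: ln_scaled_def powr_add[symmetric])
  show "set_integrable lborel {0<..} (\<lambda>t. ln_scaled k t * (t + 1) powr (- y))"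
  proof (rule set_integrable_bound[OF dom])
    have "(\<lambda>t. indicator {0<..} t *\<^sub>R (k t * (t + 1) powr (- (y / 2)))) \<in> borel_measurable lborel"
      using transf_integrableD[OF k, of "y / 2"] y unfolding set_integrable_def
      by (intro borel_measurable_integrable) simp
    moreover have eq: "(\<lambda>t. indicator {0<..} t *\<^sub>R (ln_scaled k t * (t + 1) powr (- y))) =
        (\<lambda>t. indicator {0<..} t *\<^sub>R (k t * (t + 1) powr (- (y / 2))) * (ln (t + 1) * (t + 1) powr (- (y / 2))))"
      by (auto simp: fun_eq_iff split indicator_def)
    ultimately show "set_borel_measurable lborel {0<..} (\<lambda>t. ln_scaled k t * (t + 1) powr (- y))"
      unfolding set_borel_measurable_def eq by measurable
    show "AE t in lborel. t \<in> {0<..} \<longrightarrow>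
        norm (ln_scaled k t * (t + 1) powr (- y)) \<le> norm (2 / y * (k t * (t + 1) powr (- (y / 2))))"
    proof (rule AE_I2, intro impI)
      fix t :: real
      assume "t \<in> {0<..}"
      then have t: "0 < t" by simp
      have "ln (t + 1) * (t + 1) powr (- y) \<le> 2 / y * (t + 1) powr (- (y / 2))"
        by (rule ln_mult_powr_le[OF t y])
      then have "\<bar>k t\<bar> * (ln (t + 1) * (t + 1) powr (- y)) \<le> \<bar>k t\<bar> * (2 / y * (t + 1) powr (- (y / 2)))"
        by (rule mult_left_mono) simp
      then show "norm (ln_scaled k t * (t + 1) powr (- y)) \<le> norm (2 / y * (k t * (t + 1) powr (- (y / 2))))"
        using t y by (simp add: ln_scaled_def abs_mult mult_ac)
    qed
  qed
qed

lemma transf_difference_quotient_bound: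
  assumes k: "transf_integrable k" and x: "0 < x" and h: "h \<noteq> 0" "\<bar>h\<bar> < x / 2"
  shows "\<bar>(transf k (x + h) - transf k x) / h + transf (ln_scaled k) x\<bar>
    \<le> \<bar>h\<bar> * (LINT t:{0<..}|lborel. \<bar>ln_scaled (ln_scaled k) t * (t + 1) powr (- (x / 2))\<bar>)"
proof -
  define E where "E t = k t * (t + 1) powr (- (x + h)) - k t * (t + 1) powr (- x)
    + h * (ln_scaled k t * (t + 1) powr (- x))" for t
  have int_xh: "set_integrable lborel {0<..} (\<lambda>t. k t * (t + 1) powr (- (x + h)))"
    using h x by (intro transf_integrableD[OF k]) simp
  have int_x: "set_integrable lborel {0<..} (\<lambda>t. k t * (t + 1) powr (- x))"
    by (rule transf_integrableD[OF k x])
  have int_u: "set_integrable lborel {0<..} (\<lambda>t. h * (ln_scaled k t * (t + 1) powr (- x)))"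
    by (intro set_integrable_mult_right transf_integrableD[OF transf_integrable_ln_scaled[OF k] x])
  have int_uu: "set_integrable lborel {0<..} (\<lambda>t. h\<^sup>2 * \<bar>ln_scaled (ln_scaled k) t * (t + 1) powr (- (x / 2))\<bar>)"
    using x by (intro set_integrable_mult_right set_integrable_abs transf_integrableD
        transf_integrable_ln_scaled k) simp
  have int_E: "set_integrable lborel {0<..} E"
    unfolding E_def by (intro set_integral_add set_integral_diff int_xh int_x int_u)
  have "(LINT t:{0<..}|lborel. E t) = transf k (x + h) - transf k x + h * transf (ln_scaled k) x"
    unfolding E_def transf_def
    by (subst set_integral_add(2)[OF set_integral_diff(1)[OF int_xh int_x] int_u],
        subst set_integral_diff(2)[OF int_xh int_x]) simp
  then have "\<bar>(transf k (x + h) - transf k x) / h + transf (ln_scaled k) x\<bar>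
      = \<bar>LINT t:{0<..}|lborel. E t\<bar> / \<bar>h\<bar>"
    using h by (simp add: field_simps)
  also have "\<dots> \<le> (LINT t:{0<..}|lborel. \<bar>E t\<bar>) / \<bar>h\<bar>"
    using set_integral_norm_bound[OF int_E] by (intro divide_right_mono) simp_all
  also have "\<dots> \<le> (LINT t:{0<..}|lborel. h\<^sup>2 * \<bar>ln_scaled (ln_scaled k) t * (t + 1) powr (- (x / 2))\<bar>) / \<bar>h\<bar>"
  proof (intro divide_right_mono set_integral_mono set_integrable_abs int_E int_uu)
    fix t :: real
    assume "t \<in> {0<..}"
    then have t: "0 < t" by simp
    have "E t = k t * ((t + 1) powr (- (x + h)) - (t + 1) powr (- x) + h * ln (t + 1) * (t + 1) powr (- x))"
      unfolding E_def ln_scaled_def by (simp add: algebra_simps)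
    then have "\<bar>E t\<bar> = \<bar>k t\<bar> *
        \<bar>(t + 1) powr (- (x + h)) - (t + 1) powr (- x) + h * ln (t + 1) * (t + 1) powr (- x)\<bar>"
      by (simp add: abs_mult)
    also have "\<dots> \<le> \<bar>k t\<bar> * (h\<^sup>2 * (ln (t + 1))\<^sup>2 * (t + 1) powr (- (x / 2)))"
      using h by (intro mult_left_mono powr_second_order_bound t) simp_all
    also have "\<dots> = h\<^sup>2 * \<bar>ln_scaled (ln_scaled k) t * (t + 1) powr (- (x / 2))\<bar>"
      using t by (simp add: ln_scaled_def abs_mult power2_eq_square)
    finally show "\<bar>E t\<bar> \<le> h\<^sup>2 * \<bar>ln_scaled (ln_scaled k) t * (t + 1) powr (- (x / 2))\<bar>" .
  qed simp
  also have "\<dots> = \<bar>h\<bar> * (LINT t:{0<..}|lborel. \<bar>ln_scaled (ln_scaled k) t * (t + 1) powr (- (x / 2))\<bar>)"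
    using h by (simp add: power2_eq_square field_simps)
  finally show ?thesis .
qed

lemma has_real_derivative_transf:
  assumes k: "transf_integrable k" and x: "0 < x"
  shows "(transf k has_real_derivative - transf (ln_scaled k) x) (at x)"
proof -
  define K where "K = (LINT t:{0<..}|lborel. \<bar>ln_scaled (ln_scaled k) t * (t + 1) powr (- (x / 2))\<bar>)"
  have "((\<lambda>h. (transf k (x + h) - transf k x) / h - (- transf (ln_scaled k) x)) \<longlongrightarrow> 0) (at 0)"
  proof (rule tendsto_0_le[where f = "\<lambda>h. h" and K = K])
    have "\<forall>\<^sub>F h in at 0. h \<noteq> 0 \<and> \<bar>h\<bar> < x / 2"
      unfolding eventually_at using x by (intro exI[of _ "x / 2"]) auto
    then show "\<forall>\<^sub>F h in at 0. norm ((transf k (x + h) - transf k x) / h - (- transf (ln_scaled k) x)) \<le> norm h * K"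
      by eventually_elim (use transf_difference_quotient_bound[OF k x] in \<open>simp add: K_def\<close>)
  qed (rule tendsto_ident_at)
  then show ?thesis unfolding DERIV_def LIM_zero_iff .
qed

lemma powr_minus_split: "0 < t \<Longrightarrow> (t + 1) powr (- x) = (t + 1) powr (- 1) * (t + 1) powr (1 - x)"
  for t x :: real
  unfolding powr_add[symmetric] by simp

lemma set_integral_head_lower_bound:
  fixes k :: "real \<Rightarrow> real"
  assumes int1: "set_integrable lborel {0<..<b} (\<lambda>t. k t * (t + 1) powr (- 1))"
    and intx: "set_integrable lborel {0<..<b} (\<lambda>t. k t * (t + 1) powr (- x))"
    and nonneg: "\<And>t. 0 < t \<Longrightarrow> t < b \<Longrightarrow> 0 \<le> k t" and x: "1 \<le> x"
  shows "(b + 1) powr (1 - x) * (LINT t:{0<..<b}|lborel. k t * (t + 1) powr (- 1))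
    \<le> (LINT t:{0<..<b}|lborel. k t * (t + 1) powr (- x))"
proof -
  have "(LINT t:{0<..<b}|lborel. (b + 1) powr (1 - x) * (k t * (t + 1) powr (- 1)))
      \<le> (LINT t:{0<..<b}|lborel. k t * (t + 1) powr (- x))"
  proof (rule set_integral_mono)
    show "set_integrable lborel {0<..<b} (\<lambda>t. (b + 1) powr (1 - x) * (k t * (t + 1) powr (- 1)))"
      by (intro set_integrable_mult_right int1)
    fix t :: real
    assume t: "t \<in> {0<..<b}"
    then have t0: "0 < t" by simp
    have "(b + 1) powr (1 - x) \<le> (t + 1) powr (1 - x)" using t x by (intro powr_mono2') simp_all
    moreover have "0 \<le> k t * (t + 1) powr (- 1)" using t nonneg by simp
    ultimately have "(b + 1) powr (1 - x) * (k t * (t + 1) powr (- 1))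
        \<le> (t + 1) powr (1 - x) * (k t * (t + 1) powr (- 1))"
      by (rule mult_right_mono)
    also have "\<dots> = k t * (t + 1) powr (- x)" by (simp only: powr_minus_split[OF t0, of x] mult_ac)
    finally show "(b + 1) powr (1 - x) * (k t * (t + 1) powr (- 1)) \<le> k t * (t + 1) powr (- x)" .
  qed (rule intx)
  then show ?thesis by (simp only: set_integral_mult_right)
qed

lemma set_integral_tail_lower_bound:
  fixes k :: "real \<Rightarrow> real"
  assumes int1: "set_integrable lborel {b..} (\<lambda>t. \<bar>k t * (t + 1) powr (- 1)\<bar>)"
    and intx: "set_integrable lborel {b..} (\<lambda>t. k t * (t + 1) powr (- x))"
    and b: "0 < b" "b \<le> a" and nonneg: "\<And>t. b \<le> t \<Longrightarrow> t < a \<Longrightarrow> 0 \<le> k t"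
    and x: "1 \<le> x"
  shows "- ((a + 1) powr (1 - x)) * (LINT t:{b..}|lborel. \<bar>k t * (t + 1) powr (- 1)\<bar>)
    \<le> (LINT t:{b..}|lborel. k t * (t + 1) powr (- x))"
proof -
  have "(LINT t:{b..}|lborel. - ((a + 1) powr (1 - x)) * \<bar>k t * (t + 1) powr (- 1)\<bar>)
      \<le> (LINT t:{b..}|lborel. k t * (t + 1) powr (- x))"
  proof (rule set_integral_mono)
    show "set_integrable lborel {b..} (\<lambda>t. - ((a + 1) powr (1 - x)) * \<bar>k t * (t + 1) powr (- 1)\<bar>)"
      by (intro set_integrable_mult_right int1)
    fix t :: real
    assume t: "t \<in> {b..}"
    define w where "w = k t * (t + 1) powr (- 1)"
    define e where "e = (t + 1) powr (1 - x)"
    have "0 < t" using t b by simp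
    then have kx: "k t * (t + 1) powr (- x) = w * e" by (simp only: w_def e_def powr_minus_split[of t x] mult_ac)
    show "- ((a + 1) powr (1 - x)) * \<bar>w\<bar> \<le> k t * (t + 1) powr (- x)"
    proof (cases "t < a")
      case True
      with t nonneg b have "0 \<le> w * e" by (simp add: w_def e_def)
      moreover have "- ((a + 1) powr (1 - x)) * \<bar>w\<bar> \<le> 0" by simp
      ultimately show ?thesis using kx by linarith
    next
      case False
      with b x have "e \<le> (a + 1) powr (1 - x)" unfolding e_def by (intro powr_mono2') simp_all
      then have "\<bar>w\<bar> * e \<le> \<bar>w\<bar> * (a + 1) powr (1 - x)" by (rule mult_left_mono) simp
      moreover have "- (\<bar>w\<bar> * e) \<le> w * e"
        using mult_right_mono[of "- \<bar>w\<bar>" w e] by (simp add: e_def)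
      ultimately show ?thesis by (simp add: kx mult.commute)
    qed
  qed (rule intx)
  then show ?thesis by (simp only: set_integral_mult_right)
qed

lemma transf_lower_bound:
  assumes k: "transf_integrable k" and b: "0 < b" "b < a"
    and nonneg: "\<And>t. 0 < t \<Longrightarrow> t < a \<Longrightarrow> 0 \<le> k t" and x: "1 \<le> x"
  shows "(b + 1) powr (1 - x) * (LINT t:{0<..<b}|lborel. k t * (t + 1) powr (- 1))
      - ((a + 1) powr (1 - x)) * (LINT t:{b..}|lborel. \<bar>k t * (t + 1) powr (- 1)\<bar>)
    \<le> transf k x"
proof -
  have int1: "set_integrable lborel {0<..} (\<lambda>t. k t * (t + 1) powr (- 1))"
    using transf_integrableD[OF k, of 1] by simp
  have intx: "set_integrable lborel {0<..} (\<lambda>t. k t * (t + 1) powr (- x))"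
    using x by (intro transf_integrableD[OF k]) simp
  have split: "{0<..} = {0<..<b} \<union> {b::real..}" using b by auto
  have "transf k x = (LINT t:{0<..<b}|lborel. k t * (t + 1) powr (- x))
      + (LINT t:{b..}|lborel. k t * (t + 1) powr (- x))"
    unfolding transf_def split using b
    by (intro set_integral_Un set_integrable_subset[OF intx]) auto
  moreover have "(b + 1) powr (1 - x) * (LINT t:{0<..<b}|lborel. k t * (t + 1) powr (- 1))
      \<le> (LINT t:{0<..<b}|lborel. k t * (t + 1) powr (- x))"
    using b nonneg x
    by (intro set_integral_head_lower_bound set_integrable_subset[OF int1] set_integrable_subset[OF intx]) auto
  moreover have "- ((a + 1) powr (1 - x)) * (LINT t:{b..}|lborel. \<bar>k t * (t + 1) powr (- 1)\<bar>)
      \<le> (LINT t:{b..}|lborel. k t * (t + 1) powr (- x))"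
    using b nonneg x
    by (intro set_integral_tail_lower_bound set_integrable_abs set_integrable_subset[OF int1]
        set_integrable_subset[OF intx]) auto
  ultimately show ?thesis by linarith
qed

lemma transf_eventually_pos:
  assumes k: "transf_integrable k" and a: "0 < a" and pos: "\<And>t. 0 < t \<Longrightarrow> t < a \<Longrightarrow> 0 < k t"
  shows "eventually (\<lambda>x. 0 < transf k x) at_top"
proof -
  define b where "b = a / 2"
  define P where "P = (LINT t:{0<..<b}|lborel. k t * (t + 1) powr (- 1))"
  define V where "V = (LINT t:{b..}|lborel. \<bar>k t * (t + 1) powr (- 1)\<bar>)"
  define u1 where "u1 = ln (b + 1)"
  define u2 where "u2 = ln (a + 1)"
  have b: "0 < b" "b < a" using a by (simp_all add: b_def)
  have u12: "u1 < u2" using b by (simp add: u1_def u2_def)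
  have P: "0 < P" unfolding P_def
  proof (rule set_integral_pos_of_pos_on_interval[of _ _ 0 b])
    have k_pos: "0 < k t * (t + 1) powr (- 1)" if "0 < t" "t < b" for t using that b pos by simp
    show "AE t in lborel. t \<in> {0<..<b} \<longrightarrow> 0 \<le> k t * (t + 1) powr (- 1)"
      using k_pos by (intro AE_I2) (auto simp: le_less)
    show "AE t in lborel. 0 < t \<and> t < b \<longrightarrow> 0 < k t * (t + 1) powr (- 1)"
      using k_pos by (intro AE_I2) auto
    show "set_integrable lborel {0<..<b} (\<lambda>t. k t * (t + 1) powr (- 1))"
      using transf_integrableD[OF k, of 1] by (rule set_integrable_subset) auto
  qed (use b in auto)
  have V: "0 \<le> V" unfolding V_def set_lebesgue_integral_def by (intro integral_nonneg_AE AE_I2) simp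
  have bound: "exp ((1 - x) * u1) * P - exp ((1 - x) * u2) * V \<le> transf k x" if "1 \<le> x" for x
  proof -
    have "(b + 1) powr (1 - x) = exp ((1 - x) * u1)" "(a + 1) powr (1 - x) = exp ((1 - x) * u2)"
      using b by (simp_all add: powr_def u1_def u2_def)
    moreover have "0 \<le> k t" if "0 < t" "t < a" for t using pos[OF that] by simp
    ultimately show ?thesis using transf_lower_bound[OF k b _ that] unfolding P_def V_def by simp
  qed
  \<comment> \<open>Since u1 < u2, the first term dominates the second as x grows.\<close>
  have "eventually (\<lambda>x. 1 + V / (P * (u2 - u1)) \<le> x) at_top" by (rule eventually_ge_at_top)
  then show ?thesis
  proof eventually_elim
    case (elim x)
    have x: "1 \<le> x" using elim V P u12 by (smt (verit) divide_nonneg_pos mult_pos_pos)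
    have "V \<le> P * ((x - 1) * (u2 - u1))" using elim P u12 by (simp add: field_simps)
    also have "\<dots> < P * exp ((x - 1) * (u2 - u1))" using P by (simp add: exp_gt_self)
    finally have "V * exp ((1 - x) * u2) < P * exp ((x - 1) * (u2 - u1)) * exp ((1 - x) * u2)"
      by simp
    also have "\<dots> = P * exp ((1 - x) * u1)" by (simp add: mult_exp_exp algebra_simps)
    finally show ?case using bound[OF x] by (simp add: mult.commute)
  qed
qed

section \<open>Vanishing moments and sign changes\<close>

lemma transf_sign_of_orthogonal:
  fixes h :: "real \<Rightarrow> real" and x x0 \<alpha> \<beta> \<gamma> :: real
  defines "\<psi> \<equiv> \<lambda>t. \<alpha> * (t + 1) powr (x0 - x) + \<beta> + \<gamma> * ln (t + 1)"
  assumes h: "transf_integrable h" and x0: "0 < x0" and x: "0 < x"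
    and orth0: "transf h x0 = 0" and orth1: "transf (ln_scaled h) x0 = 0"
    and nonpos: "AE t in lborel. 0 < t \<longrightarrow> h t * \<psi> t \<le> 0"
    and ab: "0 \<le> a" "a < b" and neg: "AE t in lborel. a < t \<and> t < b \<longrightarrow> h t * \<psi> t < 0"
  shows "\<alpha> * transf h x < 0"
proof -
  define J where "J t = (- \<alpha>) * (h t * (t + 1) powr (- x)) + (- \<beta>) * (h t * (t + 1) powr (- x0))
    + (- \<gamma>) * (ln_scaled h t * (t + 1) powr (- x0))" for t
  have J_eq: "J t = - ((t + 1) powr (- x0) * (h t * \<psi> t))" if "0 < t" for t
  proof -
    have "(t + 1) powr (- x) = (t + 1) powr (- x0) * (t + 1) powr (x0 - x)"
      by (simp flip: powr_add)
    then show ?thesis unfolding J_def \<psi>_def ln_scaled_def by (simp add: algebra_simps)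
  qed
  have int: "set_integrable lborel {0<..} (\<lambda>t. (- \<alpha>) * (h t * (t + 1) powr (- x)))"
    "set_integrable lborel {0<..} (\<lambda>t. (- \<beta>) * (h t * (t + 1) powr (- x0)))"
    "set_integrable lborel {0<..} (\<lambda>t. (- \<gamma>) * (ln_scaled h t * (t + 1) powr (- x0)))"
    by (intro set_integrable_mult_right transf_integrableD transf_integrable_ln_scaled h x x0)+
  have "0 < (LINT t:{0<..}|lborel. J t)"
  proof (rule set_integral_pos_of_pos_on_interval[OF _ _ ab(2)])
    show "set_integrable lborel {0<..} J"
      unfolding J_def by (intro set_integral_add int)
    show "AE t in lborel. t \<in> {0<..} \<longrightarrow> 0 \<le> J t"
      using nonpos by eventually_elim (simp add: J_eq mult_nonneg_nonpos)
    show "AE t in lborel. a < t \<and> t < b \<longrightarrow> 0 < J t"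
      using neg by eventually_elim (use ab in \<open>auto simp: J_eq mult_pos_neg\<close>)
  qed (use ab in auto)
  also have "(LINT t:{0<..}|lborel. J t) = - (\<alpha> * transf h x)"
    unfolding J_def transf_def
    by (subst set_integral_add(2)[OF set_integral_add(1)[OF int(1,2)] int(3)],
        subst set_integral_add(2)[OF int(1,2)], simp only: set_integral_mult_right)
      (use orth0 orth1 in \<open>simp add: transf_def\<close>)
  finally show ?thesis by simp
qed

lemma transf_neg_of_AE_neg:
  assumes h: "transf_integrable h" and x: "0 < x" and neg: "AE t in lborel. 0 < t \<longrightarrow> h t < 0"
  shows "transf h x < 0"
proof -
  have "0 < (LINT t:{0<..}|lborel. (- 1) * (h t * (t + 1) powr (- x)))"
  proof (rule set_integral_pos_of_pos_on_interval[of _ _ 0 1])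
    show "set_integrable lborel {0<..} (\<lambda>t. (- 1) * (h t * (t + 1) powr (- x)))"
      by (intro set_integrable_mult_right transf_integrableD[OF h x])
    show "AE t in lborel. t \<in> {0<..} \<longrightarrow> 0 \<le> (- 1) * (h t * (t + 1) powr (- x))"
      using neg by eventually_elim (auto simp: mult_nonpos_nonneg)
    show "AE t in lborel. 0 < t \<and> t < 1 \<longrightarrow> 0 < (- 1) * (h t * (t + 1) powr (- x))"
      using neg by eventually_elim (auto simp: mult_neg_pos)
  qed auto
  then show ?thesis by (simp only: set_integral_mult_right transf_def)
qed

lemma transf_orthogonal_not_one_sign_change:
  assumes h: "transf_integrable h" and x0: "0 < x0"
    and orth0: "transf h x0 = 0" and orth1: "transf (ln_scaled h) x0 = 0"
    and p: "0 \<le> p" and neg: "AE t in lborel. 0 < t \<and> t < p \<longrightarrow> h t < 0"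
    and pos: "AE t in lborel. p < t \<longrightarrow> 0 < h t"
  shows False
proof -
  have sign: "h t * (0 * (t + 1) powr (x0 - x0) + ln (p + 1) + - 1 * ln (t + 1)) \<le> 0"
    if "0 < t" "t \<noteq> p" "0 < t \<and> t < p \<longrightarrow> h t < 0" "p < t \<longrightarrow> 0 < h t" for t
  proof (cases "t < p")
    case True
    with that show ?thesis by (simp add: mult_nonpos_nonneg)
  next
    case False
    with that p show ?thesis by (simp add: mult_nonneg_nonpos)
  qed
  \<comment> \<open>With \<open>\<alpha> = 0\<close> the sign lemma yields \<open>0 < 0\<close>: vanishing moments against 1 and
    ln (t + 1) force at least two sign changes.\<close>
  have "0 * transf h x0 < 0"
  proof (rule transf_sign_of_orthogonal[OF h x0 x0 orth0 orth1, where a = p and b = "p + 1"])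
    show "AE t in lborel. 0 < t \<longrightarrow> h t * (0 * (t + 1) powr (x0 - x0) + ln (p + 1) + - 1 * ln (t + 1)) \<le> 0"
      using neg pos AE_lborel_singleton[of p] by eventually_elim (blast intro: sign)
    show "AE t in lborel. p < t \<and> t < p + 1 \<longrightarrow> h t * (0 * (t + 1) powr (x0 - x0) + ln (p + 1) + - 1 * ln (t + 1)) < 0"
      using pos by eventually_elim (use p in \<open>auto simp: mult_pos_neg\<close>)
  qed (use p in auto)
  then show False by simp
qed

lemma transf_neg_of_orthogonal_sign_pattern:
  assumes h: "transf_integrable h" and x0: "0 < x0" and x: "0 < x" "x \<noteq> x0"
    and orth0: "transf h x0 = 0" and orth1: "transf (ln_scaled h) x0 = 0"
    and pq: "0 \<le> p" "p < q"
    and neg_before: "AE t in lborel. 0 < t \<and> t < p \<longrightarrow> h t < 0"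
    and pos_between: "AE t in lborel. p < t \<and> t < q \<longrightarrow> 0 < h t"
    and neg_after: "AE t in lborel. q < t \<longrightarrow> h t < 0"
  shows "transf h x < 0"
proof -
  define s where "s = x0 - x"
  define u1 where "u1 = ln (p + 1)"
  define u2 where "u2 = ln (q + 1)"
  define \<kappa> where "\<kappa> u = (exp (s * u) - exp (s * u1)) * (u2 - u1) - (exp (s * u2) - exp (s * u1)) * (u - u1)"
    for u
  have s: "s \<noteq> 0" using x by (simp add: s_def)
  have u12: "u1 < u2" using pq by (simp add: u1_def u2_def)
  note chord = exp_chord_sign[OF s u12, folded \<kappa>_def]
  \<comment> \<open>In the variable ln (t + 1), the weight below is a positive multiple of \<kappa>, the gap between
    an exponential and its chord over [u1, u2]; its sign pattern is opposite to that of h.\<close>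
  define \<beta> \<gamma> where "\<beta> = (exp (s * u2) - exp (s * u1)) * u1 - exp (s * u1) * (u2 - u1)"
    and "\<gamma> = - (exp (s * u2) - exp (s * u1))"
  have \<kappa>_eq: "(u2 - u1) * (t + 1) powr (x0 - x) + \<beta> + \<gamma> * ln (t + 1) = \<kappa> (ln (t + 1))" if "0 < t" for t
    using that by (simp add: \<kappa>_def \<beta>_def \<gamma>_def s_def powr_def algebra_simps)
  have sign: "h t * ((u2 - u1) * (t + 1) powr (x0 - x) + \<beta> + \<gamma> * ln (t + 1)) < 0"
    if t: "0 < t" "t \<noteq> p" "t \<noteq> q" and signs: "0 < t \<and> t < p \<longrightarrow> h t < 0"
      "p < t \<and> t < q \<longrightarrow> 0 < h t" "q < t \<longrightarrow> h t < 0" for t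
  proof -
    consider "t < p" | "p < t" "t < q" | "q < t" using t by force
    then have "h t * \<kappa> (ln (t + 1)) < 0"
    proof cases
      case 1
      with t pq have "0 < \<kappa> (ln (t + 1))" by (intro chord(1)) (simp add: u1_def)
      with 1 t signs show ?thesis by (simp add: mult_neg_pos)
    next
      case 2
      with t pq have "\<kappa> (ln (t + 1)) < 0" by (intro chord(2)) (simp_all add: u1_def u2_def)
      with 2 t signs show ?thesis by (simp add: mult_pos_neg)
    next
      case 3
      with t pq have "0 < \<kappa> (ln (t + 1))" by (intro chord(3)) (simp add: u2_def)
      with 3 t pq signs show ?thesis by (simp add: mult_neg_pos)
    qed
    with t show ?thesis by (simp add: \<kappa>_eq)
  qed
  note signs = neg_before pos_between neg_after AE_lborel_singleton[of p] AE_lborel_singleton[of q]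
  have "(u2 - u1) * transf h x < 0"
  proof (rule transf_sign_of_orthogonal[OF h x0 x(1) orth0 orth1, where a = p and b = q])
    show "AE t in lborel. 0 < t \<longrightarrow> h t * ((u2 - u1) * (t + 1) powr (x0 - x) + \<beta> + \<gamma> * ln (t + 1)) \<le> 0"
      using signs by eventually_elim (blast intro: less_imp_le[OF sign])
    show "AE t in lborel. p < t \<and> t < q \<longrightarrow> h t * ((u2 - u1) * (t + 1) powr (x0 - x) + \<beta> + \<gamma> * ln (t + 1)) < 0"
      using signs by eventually_elim (use pq in \<open>auto intro!: sign\<close>)
  qed (use pq in auto)
  with u12 show ?thesis by (simp add: mult_less_0_iff)
qed

section \<open>Quotients of transforms\<close>

locale transf_ratio =
  fixes f g :: "real \<Rightarrow> real"
  assumes g_pos: "\<And>t. 0 < t \<Longrightarrow> 0 < g t"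
    and f_integrable: "transf_integrable f"
    and g_integrable: "transf_integrable g"
begin

abbreviation ratio :: "real \<Rightarrow> real" where "ratio \<equiv> \<lambda>x. transf f x / transf g x"

abbreviation H :: "real \<Rightarrow> real" where "H \<equiv> H_fun (transf f) (transf g)"

lemma transf_g_pos: "0 < x \<Longrightarrow> 0 < transf g x"
  by (rule transf_pos[OF g_integrable g_pos])

lemma transf_ratio_ln_scaled: "transf_ratio (ln_scaled f) (ln_scaled g)"
  by unfold_locales
    (simp_all add: ln_scaled_def g_pos transf_integrable_ln_scaled f_integrable g_integrable)

lemma deriv_transf:
  "0 < x \<Longrightarrow> deriv (transf f) x = - transf (ln_scaled f) x"
  "0 < x \<Longrightarrow> deriv (transf g) x = - transf (ln_scaled g) x"
  by (intro DERIV_imp_deriv has_real_derivative_transf f_integrable g_integrable; assumption)+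

lemma H_transf:
  assumes "0 < x"
  shows "H x
    = (transf (ln_scaled f) x / transf (ln_scaled g) x - transf f x / transf g x) * transf g x"
  using transf_g_pos[OF assms] by (simp add: H_fun_def deriv_transf[OF assms] field_simps)

lemma ratio_has_derivative:
  assumes x: "0 < x"
  shows "(ratio has_real_derivative
    - transf (ln_scaled g) x * H x / (transf g x)\<^sup>2) (at x)"
proof -
  interpret ln: transf_ratio "ln_scaled f" "ln_scaled g" by (rule transf_ratio_ln_scaled)
  have "(ratio has_real_derivative
      (- transf (ln_scaled f) x * transf g x - transf f x * - transf (ln_scaled g) x) / (transf g x * transf g x)) (at x)"
    using transf_g_pos[OF x]
    by (intro DERIV_divide has_real_derivative_transf f_integrable g_integrable x) simp
  moreover have "(- transf (ln_scaled f) x * transf g x - transf f x * - transf (ln_scaled g) x)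
      / (transf g x * transf g x)
      = - transf (ln_scaled g) x * H x / (transf g x)\<^sup>2"
    using transf_g_pos[OF x] ln.transf_g_pos[OF x]
    by (simp add: H_transf[OF x] power2_eq_square field_simps)
  ultimately show ?thesis by simp
qed

lemma H_has_derivative:
  assumes x: "0 < x"
    and D: "((\<lambda>x. transf (ln_scaled f) x / transf (ln_scaled g) x) has_real_derivative D) (at x)"
  shows "(H has_real_derivative D * transf g x) (at x)"
proof -
  interpret ln: transf_ratio "ln_scaled f" "ln_scaled g" by (rule transf_ratio_ln_scaled)
  have "((\<lambda>x. transf (ln_scaled f) x / transf (ln_scaled g) x * transf g x - transf f x) has_real_derivative
      D * transf g x + - transf (ln_scaled g) x * (transf (ln_scaled f) x / transf (ln_scaled g) x)
      - - transf (ln_scaled f) x) (at x)"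
    by (intro DERIV_diff DERIV_mult D has_real_derivative_transf f_integrable g_integrable x)
  then have "((\<lambda>x. transf (ln_scaled f) x / transf (ln_scaled g) x * transf g x - transf f x)
      has_real_derivative D * transf g x) (at x)"
    using ln.transf_g_pos[OF x] by simp
  then show ?thesis
    by (rule has_field_derivative_transform_within_open[where S = "{0<..}"])
      (use x in \<open>auto simp: H_transf field_simps dest: transf_g_pos\<close>)
qed

lemma H_mono_on_if_ln_ratio_mono:
  assumes mono: "strict_mono_on {0<..<b} (\<lambda>x. transf (ln_scaled f) x / transf (ln_scaled g) x)"
  shows "mono_on {0<..<b} H"
proof (rule mono_onI)
  interpret ln: transf_ratio "ln_scaled f" "ln_scaled g" by (rule transf_ratio_ln_scaled)
  fix x y
  assume xy: "x \<in> {0<..<b}" "y \<in> {0<..<b}" "x \<le> y"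
  show "H x \<le> H y"
  proof (rule DERIV_nonneg_imp_nondecreasing[of x y H, OF xy(3)])
    fix z
    assume "x \<le> z" "z \<le> y"
    with xy have z: "0 < z" "z \<in> interior {0<..<b}" by auto
    let ?D = "- transf (ln_scaled (ln_scaled g)) z * ln.H z / (transf (ln_scaled g) z)\<^sup>2"
    have D: "(ln.ratio has_real_derivative ?D) (at z)" by (rule ln.ratio_has_derivative[OF z(1)])
    have "0 \<le> ?D * transf g z"
      using strict_mono_on_imp_deriv_nonneg[OF mono D z(2)] transf_g_pos[OF z(1)]
      by (intro mult_nonneg_nonneg) auto
    with H_has_derivative[OF z(1) D] show "\<exists>D. (H has_real_derivative D) (at z) \<and> 0 \<le> D"
      by blast
  qed
qed

lemma H_antimono_on_if_ln_ratio_antimono: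
  assumes anti: "strict_antimono_on {0<..} (\<lambda>x. transf (ln_scaled f) x / transf (ln_scaled g) x)"
  shows "antimono_on {0<..} H"
proof (rule monotone_onI)
  interpret ln: transf_ratio "ln_scaled f" "ln_scaled g" by (rule transf_ratio_ln_scaled)
  fix x y :: real
  assume xy: "x \<in> {0<..}" "y \<in> {0<..}" "x \<le> y"
  show "H y \<le> H x"
  proof (rule DERIV_nonpos_imp_nonincreasing[of x y H, OF xy(3)])
    fix z
    assume "x \<le> z" "z \<le> y"
    with xy have z: "0 < z" "z \<in> interior {0<..}" by (auto simp: interior_open)
    let ?D = "- transf (ln_scaled (ln_scaled g)) z * ln.H z / (transf (ln_scaled g) z)\<^sup>2"
    have D: "(ln.ratio has_real_derivative ?D) (at z)" by (rule ln.ratio_has_derivative[OF z(1)])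
    have "?D * transf g z \<le> 0"
      using strict_antimono_on_imp_deriv_nonpos[OF anti D z(2)] transf_g_pos[OF z(1)]
      by (intro mult_nonpos_nonneg) auto
    with H_has_derivative[OF z(1) D] show "\<exists>D. (H has_real_derivative D) (at z) \<and> D \<le> 0"
      by blast
  qed
qed

lemma eventually_less_ratio:
  assumes a: "0 < a" and less: "\<And>t. 0 < t \<Longrightarrow> t < a \<Longrightarrow> c < f t / g t"
  shows "eventually (\<lambda>x. c < ratio x) at_top"
proof -
  define k where "k t = 1 * f t + (- c) * g t" for t
  have k: "transf_integrable k"
    unfolding k_def by (rule transf_integrable_lincomb[OF f_integrable g_integrable])
  have "eventually (\<lambda>x. 0 < transf k x) at_top"
    using less g_pos by (intro transf_eventually_pos[OF k a]) (simp add: k_def field_simps)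
  then show ?thesis
    using eventually_gt_at_top[of 0]
  proof eventually_elim
    case (elim x)
    have "transf k x = 1 * transf f x + (- c) * transf g x"
      unfolding k_def by (rule transf_lincomb[OF f_integrable g_integrable elim(2)])
    with elim transf_g_pos[of x] show ?case by (simp add: field_simps)
  qed
qed

lemma transf_ratio_uminus: "transf_ratio (\<lambda>t. - f t) g"
proof
  show "transf_integrable (\<lambda>t. - f t)"
    using transf_integrable_lincomb[OF f_integrable g_integrable, of "- 1" 0] by simp
qed (simp_all add: g_pos g_integrable)

lemma eventually_ratio_less:
  assumes a: "0 < a" and less: "\<And>t. 0 < t \<Longrightarrow> t < a \<Longrightarrow> f t / g t < c"
  shows "eventually (\<lambda>x. ratio x < c) at_top"
proof -
  interpret neg: transf_ratio "\<lambda>t. - f t" g by (rule transf_ratio_uminus)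
  have "eventually (\<lambda>x. - c < neg.ratio x) at_top"
    using less by (intro neg.eventually_less_ratio[OF a]) simp
  then show ?thesis by (simp add: transf_uminus)
qed

lemma ratio_deriv_pos_iff:
  assumes x: "0 < x"
  shows "0 < - transf (ln_scaled g) x * H x / (transf g x)\<^sup>2 \<longleftrightarrow> H x < 0"
proof -
  define c where "c = transf (ln_scaled g) x / (transf g x)\<^sup>2"
  have c: "0 < c"
    using transf_ratio.transf_g_pos[OF transf_ratio_ln_scaled x] transf_g_pos[OF x] by (simp add: c_def)
  have "- transf (ln_scaled g) x * H x / (transf g x)\<^sup>2 = - (c * H x)" by (simp add: c_def)
  with c show ?thesis by (simp add: mult_less_0_iff)
qed

lemma ratio_strict_mono_or_antimono:
  assumes S: "is_interval S" "S \<subseteq> {0<..}" and H: "\<And>x. x \<in> interior S \<Longrightarrow> H x \<noteq> 0"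
  shows "strict_mono_on S ratio \<or> strict_antimono_on S ratio"
proof (rule strict_mono_or_antimono_of_deriv_nonzero[OF S(1)])
  show "(ratio has_real_derivative - transf (ln_scaled g) x * H x / (transf g x)\<^sup>2) (at x)"
    if "x \<in> S" for x
    using that S(2) by (intro ratio_has_derivative) auto
  show "- transf (ln_scaled g) x * H x / (transf g x)\<^sup>2 \<noteq> 0" if x: "x \<in> interior S" for x
  proof -
    have "0 < x" using x interior_subset S(2) by blast
    with H[OF x] show ?thesis
      using transf_g_pos[of x] transf_ratio.transf_g_pos[OF transf_ratio_ln_scaled, of x] by simp
  qed
qed

lemma H_nonneg_if_ratio_antimono:
  assumes anti: "strict_antimono_on {0<..} ratio" and x: "0 < x"
  shows "0 \<le> H x"
proof -
  have "- transf (ln_scaled g) x * H x / (transf g x)\<^sup>2 \<le> 0"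
    using x by (intro strict_antimono_on_imp_deriv_nonpos[OF anti ratio_has_derivative])
      (simp_all add: interior_open)
  with ratio_deriv_pos_iff[OF x] show ?thesis by linarith
qed

lemma H_neg_if_ratio_strict_mono:
  assumes mono: "strict_mono_on {a<..<b} ratio" and ab: "0 \<le> a" "a < b"
  obtains \<xi> where "a < \<xi>" "\<xi> < b" "H \<xi> < 0"
proof -
  define a' b' where "a' = (2 * a + b) / 3" and "b' = (a + 2 * b) / 3"
  have ab': "a < a'" "a' < b'" "b' < b" using ab by (simp_all add: a'_def b'_def)
  have "\<exists>\<xi>>a'. \<xi> < b' \<and>
      ratio b' - ratio a' = (b' - a') * (- transf (ln_scaled g) \<xi> * H \<xi> / (transf g \<xi>)\<^sup>2)"
  proof (rule MVT2[OF ab'(2)])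
    show "(ratio has_real_derivative - transf (ln_scaled g) x * H x / (transf g x)\<^sup>2) (at x)"
      if "a' \<le> x" "x \<le> b'" for x
      using that ab ab' by (intro ratio_has_derivative) simp
  qed
  then obtain \<xi> where \<xi>: "a' < \<xi>" "\<xi> < b'"
    and mvt: "ratio b' - ratio a' = (b' - a') * (- transf (ln_scaled g) \<xi> * H \<xi> / (transf g \<xi>)\<^sup>2)"
    by blast
  have "ratio a' < ratio b'" using ab' by (intro strict_mono_onD[OF mono]) auto
  with mvt have "0 < (b' - a') * (- transf (ln_scaled g) \<xi> * H \<xi> / (transf g \<xi>)\<^sup>2)" by simp
  from zero_less_mult_pos[OF this] ab' have "0 < - transf (ln_scaled g) \<xi> * H \<xi> / (transf g \<xi>)\<^sup>2"
    by simp
  with ratio_deriv_pos_iff ab ab' \<xi> have "H \<xi> < 0" by simp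
  with \<xi> ab' show thesis by (intro that) auto
qed

lemma H_uminus:
  assumes x: "0 < x"
  shows "H_fun (transf (\<lambda>t. - f t)) (transf g) x = - H x"
proof -
  interpret neg: transf_ratio "\<lambda>t. - f t" g by (rule transf_ratio_uminus)
  have "ln_scaled (\<lambda>t. - f t) = (\<lambda>t. - ln_scaled f t)" by (simp add: fun_eq_iff ln_scaled_def)
  then show ?thesis by (simp add: neg.H_transf[OF x] H_transf[OF x] transf_uminus algebra_simps)
qed

lemma tendsto_H_uminus:
  assumes "((\<lambda>x. ereal (H x)) \<longlongrightarrow> L) (at_right 0)"
  shows "((\<lambda>x. ereal (H_fun (transf (\<lambda>t. - f t)) (transf g) x)) \<longlongrightarrow> - L) (at_right 0)"
proof (rule Lim_transform_eventually[OF tendsto_uminus_ereal[OF assms]])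
  show "\<forall>\<^sub>F x in at_right 0. - ereal (H x) = ereal (H_fun (transf (\<lambda>t. - f t)) (transf g) x)"
    using eventually_at_right_less[of 0] by eventually_elim (simp add: H_uminus)
qed

end

section \<open>Unimodal quotients\<close>

locale unimodal_transf_ratio = transf_ratio +
  fixes t0 :: real
  assumes t0_pos: "0 < t0"
    and ratio_strict_mono: "strict_mono_on {0<..<t0} (\<lambda>t. f t / g t)"
    and ratio_strict_antimono: "strict_antimono_on {t0<..} (\<lambda>t. f t / g t)"
begin

lemma unimodal_ln_scaled: "unimodal_transf_ratio (ln_scaled f) (ln_scaled g) t0"
proof -
  interpret ln: transf_ratio "ln_scaled f" "ln_scaled g" by (rule transf_ratio_ln_scaled)
  have same: "ln_scaled f t / ln_scaled g t = f t / g t" if "0 < t" for t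
    using that by (simp add: ln_scaled_def)
  show ?thesis
  proof
    show "strict_mono_on {0<..<t0} (\<lambda>t. ln_scaled f t / ln_scaled g t)"
      using ratio_strict_mono by (auto simp: monotone_on_def same)
    show "strict_antimono_on {t0<..} (\<lambda>t. ln_scaled f t / ln_scaled g t)"
      using ratio_strict_antimono t0_pos by (auto simp: monotone_on_def same)
  qed (rule t0_pos)
qed

lemma ratio_crossing_cases:
  obtains (one_change) p where "0 \<le> p" "\<And>t. 0 < t \<Longrightarrow> t < p \<Longrightarrow> f t / g t < c"
      "\<And>t. p < t \<Longrightarrow> t \<noteq> t0 \<Longrightarrow> c < f t / g t"
  | (two_changes) p q where "0 \<le> p" "p < q" "\<And>t. 0 < t \<Longrightarrow> t < p \<Longrightarrow> f t / g t < c"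
      "\<And>t. p < t \<Longrightarrow> t < q \<Longrightarrow> t \<noteq> t0 \<Longrightarrow> c < f t / g t"
      "\<And>t. q < t \<Longrightarrow> f t / g t < c"
  | (below) "\<And>t. 0 < t \<Longrightarrow> t \<noteq> t0 \<Longrightarrow> f t / g t < c"
proof -
  obtain p where p: "0 \<le> p" "p \<le> t0"
    and below_p: "\<And>t. 0 < t \<Longrightarrow> t < p \<Longrightarrow> f t / g t < c"
    and above_p: "\<And>t. p < t \<Longrightarrow> t < t0 \<Longrightarrow> c < f t / g t"
    using strict_mono_on_crossing[OF ratio_strict_mono less_imp_le[OF t0_pos], of c] by blast
  from strict_antimono_on_crossing[OF ratio_strict_antimono, of c] show thesis
  proof cases
    case 1
    show thesis
    proof (rule one_change[OF p(1) below_p])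
      show "c < f t / g t" if "p < t" "t \<noteq> t0" for t
        using that 1 above_p[of t] by (cases "t < t0") auto
    qed
  next
    case (2 q)
    show thesis
    proof (cases "p < q")
      case True
      show thesis
      proof (rule two_changes[OF p(1) True below_p _ 2(3)])
        show "c < f t / g t" if "p < t" "t < q" "t \<noteq> t0" for t
          using that 2 above_p[of t] by (cases "t < t0") auto
      qed
    next
      case False
      with p 2(1) have "p = t0" "q = t0" by auto
      show thesis
      proof (rule below)
        show "f t / g t < c" if "0 < t" "t \<noteq> t0" for t
          using that 2(3)[of t] below_p[of t] \<open>p = t0\<close> \<open>q = t0\<close> by (cases "t < t0") auto
      qed
    qed
  qed
qed

lemma transf_less_at_critical:
  assumes x0: "0 < x0" and x: "0 < x" "x \<noteq> x0"
    and eq0: "transf f x0 = c * transf g x0"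
    and eq1: "transf (ln_scaled f) x0 = c * transf (ln_scaled g) x0"
  shows "transf f x < c * transf g x"
proof -
  define h where "h t = 1 * f t + (- c) * g t" for t
  have h: "transf_integrable h"
    unfolding h_def by (rule transf_integrable_lincomb[OF f_integrable g_integrable])
  have transf_h: "transf h y = transf f y - c * transf g y" if "0 < y" for y
    unfolding h_def using transf_lincomb[OF f_integrable g_integrable that, of 1 "- c"] by simp
  have orth0: "transf h x0 = 0" using transf_h[OF x0] eq0 by simp
  have "transf (ln_scaled h) x0 = 1 * transf (ln_scaled f) x0 + (- c) * transf (ln_scaled g) x0"
    unfolding h_def ln_scaled_def distrib_right mult.assoc
    by (rule transf_lincomb[OF transf_integrable_ln_scaled[OF f_integrable]
          transf_integrable_ln_scaled[OF g_integrable] x0, unfolded ln_scaled_def])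
  with eq1 have orth1: "transf (ln_scaled h) x0 = 0" by simp
  have h_eq: "h t = g t * (f t / g t - c)" if "0 < t" for t
    using g_pos[OF that] by (simp add: h_def field_simps)
  have h_neg: "h t < 0" if "0 < t" "f t / g t < c" for t
    using that g_pos[OF that(1)] by (simp add: h_eq mult_pos_neg)
  have h_pos: "0 < h t" if "0 < t" "c < f t / g t" for t
    using that g_pos[OF that(1)] by (simp add: h_eq)
  from ratio_crossing_cases[of c] show ?thesis
  proof cases
    case (one_change p)
    have "AE t in lborel. 0 < t \<and> t < p \<longrightarrow> h t < 0"
      using one_change by (intro AE_I2) (auto intro: h_neg)
    moreover have "AE t in lborel. p < t \<longrightarrow> 0 < h t"
      using AE_lborel_singleton[of t0] by eventually_elim (use one_change in \<open>auto intro: h_pos\<close>)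
    ultimately show ?thesis
      using transf_orthogonal_not_one_sign_change[OF h x0 orth0 orth1 one_change(1)] by blast
  next
    case (two_changes p q)
    have "AE t in lborel. 0 < t \<and> t < p \<longrightarrow> h t < 0"
      using two_changes by (intro AE_I2) (auto intro: h_neg)
    moreover have "AE t in lborel. p < t \<and> t < q \<longrightarrow> 0 < h t"
      using AE_lborel_singleton[of t0] by eventually_elim (use two_changes in \<open>auto intro: h_pos\<close>)
    moreover have "AE t in lborel. q < t \<longrightarrow> h t < 0"
      using two_changes by (intro AE_I2) (auto intro: h_neg)
    ultimately have "transf h x < 0"
      using transf_neg_of_orthogonal_sign_pattern[OF h x0 x orth0 orth1 two_changes(1,2)] by blast
    with transf_h[OF x(1)] show ?thesis by simp
  next
    case below
    have "AE t in lborel. 0 < t \<longrightarrow> h t < 0"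
      using AE_lborel_singleton[of t0] by eventually_elim (use below in \<open>auto intro: h_neg\<close>)
    with transf_neg_of_AE_neg[OF h x0] orth0 show ?thesis by simp
  qed
qed

lemma ratio_less_at_critical:
  assumes z: "0 < z" and Hz: "H z = 0" and x: "0 < x" "x \<noteq> z"
  shows "ratio x < ratio z"
proof -
  interpret ln: transf_ratio "ln_scaled f" "ln_scaled g" by (rule transf_ratio_ln_scaled)
  have "ln.ratio z = ratio z" using Hz H_transf[OF z] transf_g_pos[OF z] by simp
  then have eq1: "transf (ln_scaled f) z = ratio z * transf (ln_scaled g) z"
    using ln.transf_g_pos[OF z] by (simp add: field_simps)
  have eq0: "transf f z = ratio z * transf g z" using transf_g_pos[OF z] by simp
  have "transf f x < ratio z * transf g x" by (rule transf_less_at_critical[OF z x eq0 eq1])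
  with transf_g_pos[OF x(1)] show ?thesis by (simp add: field_simps)
qed

lemma ratio_not_strict_mono: "\<not> strict_mono_on {0<..} ratio"
proof
  assume mono: "strict_mono_on {0<..} ratio"
  define m where "m = Inf ((\<lambda>t. f t / g t) ` {0<..<t0})"
  have below: "ratio x < f a / g a" if x: "0 < x" and a: "0 < a" "a < t0" for x a
  proof -
    have "f t / g t < f a / g a" if "0 < t" "t < a" for t
      using that a by (intro strict_mono_onD[OF ratio_strict_mono]) auto
    then have "eventually (\<lambda>y. ratio y < f a / g a \<and> x < y) at_top"
      by (intro eventually_conj eventually_ratio_less[OF a(1)] eventually_gt_at_top)
    then obtain y where "ratio y < f a / g a" "x < y" by (auto dest: eventually_happens)
    moreover have "ratio x < ratio y" using x \<open>x < y\<close> by (intro strict_mono_onD[OF mono]) auto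
    ultimately show ?thesis by simp
  qed
  have bdd: "bdd_below ((\<lambda>t. f t / g t) ` {0<..<t0})"
    using below[of 1] by (intro bdd_belowI2[of _ "ratio 1"]) (auto intro: less_imp_le)
  have ratio_le_m: "ratio x \<le> m" if "0 < x" for x
    unfolding m_def using t0_pos by (intro cInf_greatest) (auto intro!: less_imp_le[OF below[OF that]])
  have "m < f t / g t" if "0 < t" "t < t0" for t
  proof -
    have "m \<le> f (t / 2) / g (t / 2)" unfolding m_def using that by (intro cInf_lower bdd) auto
    also have "\<dots> < f t / g t" using that by (intro strict_mono_onD[OF ratio_strict_mono]) auto
    finally show ?thesis .
  qed
  then have "eventually (\<lambda>x. m < ratio x \<and> 0 < x) at_top"
    by (intro eventually_conj eventually_less_ratio[OF t0_pos] eventually_gt_at_top)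
  then obtain x where "m < ratio x" "0 < x" by (auto dest: eventually_happens)
  with ratio_le_m show False by force
qed

lemma ratio_unimodal_at_critical:
  assumes z: "0 < z" "H z = 0"
  shows "strict_mono_on {0<..<z} ratio \<and> strict_antimono_on {z<..} ratio"
proof -
  \<comment> \<open>Every critical point is a strict global maximum, so there is only one.\<close>
  have H_nonzero: "H x \<noteq> 0" if "0 < x" "x \<noteq> z" for x
    using that ratio_less_at_critical[OF z that] ratio_less_at_critical[OF that(1) _ z(1) that(2)[symmetric]]
    by force
  have "strict_mono_on {0<..z} ratio \<or> strict_antimono_on {0<..z} ratio"
  proof (rule ratio_strict_mono_or_antimono)
    show "H x \<noteq> 0" if "x \<in> interior {0<..z}" for x using that by (intro H_nonzero) auto
  qed auto
  moreover have "ratio (z / 2) < ratio z" using z by (intro ratio_less_at_critical) auto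
  then have "\<not> strict_antimono_on {0<..z} ratio"
    using z monotone_onD[of "{0<..z}" "(<)" "(>)" ratio "z / 2" z] by auto
  ultimately have "strict_mono_on {0<..z} ratio" by blast
  moreover have "strict_mono_on {z..} ratio \<or> strict_antimono_on {z..} ratio"
  proof (rule ratio_strict_mono_or_antimono)
    show "H x \<noteq> 0" if "x \<in> interior {z..}" for x using that z by (intro H_nonzero) auto
  qed (use z in auto)
  moreover have "ratio (z + 1) < ratio z" using z by (intro ratio_less_at_critical) auto
  then have "\<not> strict_mono_on {z..} ratio"
    using monotone_onD[of "{z..}" "(<)" "(<)" ratio z "z + 1"] by auto
  ultimately show ?thesis by (auto intro: monotone_on_subset)
qed

lemma ratio_shape:
  "strict_antimono_on {0<..} ratio \<or>
    (\<exists>x1>0. strict_mono_on {0<..<x1} ratio \<and> strict_antimono_on {x1<..} ratio)"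
proof (cases "\<exists>z>0. H z = 0")
  case True
  with ratio_unimodal_at_critical show ?thesis by blast
next
  case False
  then have "strict_mono_on {0<..} ratio \<or> strict_antimono_on {0<..} ratio"
    by (intro ratio_strict_mono_or_antimono) (auto simp: interior_open)
  with ratio_not_strict_mono show ?thesis by blast
qed

lemma H_lim_neg_if_ratio_unimodal:
  assumes H_lim: "((\<lambda>x. ereal (H x)) \<longlongrightarrow> L) (at_right 0)"
    and x1: "0 < x1" and mono: "strict_mono_on {0<..<x1} ratio"
    and anti: "strict_antimono_on {x1<..} ratio"
  shows "L < 0"
proof -
  interpret ln: unimodal_transf_ratio "ln_scaled f" "ln_scaled g" t0 by (rule unimodal_ln_scaled)
  from ln.ratio_shape show ?thesis
  proof
    assume "strict_antimono_on {0<..} ln.ratio"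
    then have H_anti: "antimono_on {0<..} H" by (rule H_antimono_on_if_ln_ratio_antimono)
    obtain \<xi> where \<xi>: "0 < \<xi>" "\<xi> < x1" "H \<xi> < 0"
      using H_neg_if_ratio_strict_mono[OF mono order.refl x1] by blast
    have "H (x1 + 1) \<le> H \<xi>" using \<xi> by (intro monotone_onD[OF H_anti]) auto
    with \<xi> x1 have "0 < - transf (ln_scaled g) (x1 + 1) * H (x1 + 1) / (transf g (x1 + 1))\<^sup>2"
      by (intro ratio_deriv_pos_iff[THEN iffD2]) simp_all
    moreover have "- transf (ln_scaled g) (x1 + 1) * H (x1 + 1) / (transf g (x1 + 1))\<^sup>2 \<le> 0"
      using x1 by (intro strict_antimono_on_imp_deriv_nonpos[OF anti ratio_has_derivative])
        (simp_all add: interior_open)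
    ultimately show ?thesis by simp
  next
    assume "\<exists>y0>0. strict_mono_on {0<..<y0} ln.ratio \<and> strict_antimono_on {y0<..} ln.ratio"
    then obtain y0 where y0: "0 < y0" "strict_mono_on {0<..<y0} ln.ratio" by blast
    from y0(2) have H_mono: "mono_on {0<..<y0} H" by (rule H_mono_on_if_ln_ratio_mono)
    have "strict_mono_on {0<..<min x1 y0} ratio" by (rule monotone_on_subset[OF mono]) auto
    with x1 y0(1) obtain \<eta> where \<eta>: "0 < \<eta>" "\<eta> < min x1 y0" "H \<eta> < 0"
      using H_neg_if_ratio_strict_mono[of 0 "min x1 y0"] by auto
    have "H x \<le> H \<eta>" if "0 < x" "x < \<eta>" for x
      using that \<eta> by (intro monotone_onD[OF H_mono]) auto
    then have "eventually (\<lambda>x. ereal (H x) \<le> ereal (H \<eta>)) (at_right 0)"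
      unfolding eventually_at_right[OF \<eta>(1)] by (intro exI[of _ \<eta>]) (simp add: \<eta>(1))
    with H_lim have "L \<le> ereal (H \<eta>)" by (rule tendsto_upperbound) simp
    with \<eta>(3) show ?thesis by (simp add: zero_ereal_def le_less_trans)
  qed
qed

theorem ratio_antimono_iff_H_lim:
  assumes H_lim: "((\<lambda>x. ereal (H x)) \<longlongrightarrow> L) (at_right 0)"
  shows "(strict_antimono_on {0<..} ratio \<longleftrightarrow> 0 \<le> L) \<and>
    (L < 0 \<longrightarrow> (\<exists>x1>0. strict_mono_on {0<..<x1} ratio \<and> strict_antimono_on {x1<..} ratio))"
proof -
  have L_nonneg: "0 \<le> L" if anti: "strict_antimono_on {0<..} ratio"
  proof -
    have "eventually (\<lambda>x. ereal 0 \<le> ereal (H x)) (at_right 0)"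
      using eventually_at_right_less[of 0] by eventually_elim (simp add: H_nonneg_if_ratio_antimono[OF anti])
    with H_lim have "ereal 0 \<le> L" by (rule tendsto_lowerbound) simp
    then show ?thesis by (simp add: zero_ereal_def)
  qed
  show ?thesis
    using ratio_shape L_nonneg H_lim_neg_if_ratio_unimodal[OF H_lim] by (meson not_less)
qed

end

theorem corollary16:
  fixes f g :: "real \<Rightarrow> real" and t0 :: real and L :: ereal
  assumes g_pos: "\<And>t. t > 0 \<Longrightarrow> g t > 0"
    and f_int: "\<And>x. x > 0 \<Longrightarrow> set_integrable lborel {0<..} (\<lambda>t. f t * (t + 1) powr (- x))"
    and g_int: "\<And>x. x > 0 \<Longrightarrow> set_integrable lborel {0<..} (\<lambda>t. g t * (t + 1) powr (- x))"
    and t0_pos: "t0 > 0"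
    and H_lim: "((\<lambda>x. ereal (H_fun (transf f) (transf g) x)) \<longlongrightarrow> L) (at_right 0)"
  shows
    "(strict_mono_on {0<..<t0} (\<lambda>t. f t / g t) \<and> strict_antimono_on {t0<..} (\<lambda>t. f t / g t) \<longrightarrow>
        ((strict_antimono_on {0<..} (\<lambda>x. transf f x / transf g x) \<longleftrightarrow> L \<ge> 0) \<and>
         (L < 0 \<longrightarrow> (\<exists>x1>0. strict_mono_on {0<..<x1} (\<lambda>x. transf f x / transf g x) \<and>
                                strict_antimono_on {x1<..} (\<lambda>x. transf f x / transf g x)))))
     \<and>
     (strict_antimono_on {0<..<t0} (\<lambda>t. f t / g t) \<and> strict_mono_on {t0<..} (\<lambda>t. f t / g t) \<longrightarrow>
        ((strict_mono_on {0<..} (\<lambda>x. transf f x / transf g x) \<longleftrightarrow> L \<le> 0) \<and>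
         (L > 0 \<longrightarrow> (\<exists>x1>0. strict_antimono_on {0<..<x1} (\<lambda>x. transf f x / transf g x) \<and>
                                strict_mono_on {x1<..} (\<lambda>x. transf f x / transf g x)))))"
proof -
  interpret transf_ratio f g
    using g_pos f_int g_int by unfold_locales (auto simp: transf_integrable_def)
  show ?thesis
  proof (intro conjI impI)
    assume "strict_mono_on {0<..<t0} (\<lambda>t. f t / g t) \<and> strict_antimono_on {t0<..} (\<lambda>t. f t / g t)"
    then interpret unimodal_transf_ratio f g t0 using t0_pos by unfold_locales auto
    from ratio_antimono_iff_H_lim[OF H_lim]
    show "strict_antimono_on {0<..} ratio \<longleftrightarrow> 0 \<le> L"
      and "L < 0 \<Longrightarrow> \<exists>x1>0. strict_mono_on {0<..<x1} ratio \<and> strict_antimono_on {x1<..} ratio"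
      by blast+
  next
    assume shape: "strict_antimono_on {0<..<t0} (\<lambda>t. f t / g t) \<and> strict_mono_on {t0<..} (\<lambda>t. f t / g t)"
    interpret neg: transf_ratio "\<lambda>t. - f t" g by (rule transf_ratio_uminus)
    interpret neg: unimodal_transf_ratio "\<lambda>t. - f t" g t0
      using shape t0_pos by unfold_locales (simp_all add: strict_mono_on_uminus_iff)
    have "neg.ratio = (\<lambda>x. - ratio x)" by (simp add: fun_eq_iff transf_uminus)
    with neg.ratio_antimono_iff_H_lim[OF tendsto_H_uminus[OF H_lim]]
    show "strict_mono_on {0<..} ratio \<longleftrightarrow> L \<le> 0"
      and "0 < L \<Longrightarrow> \<exists>x1>0. strict_antimono_on {0<..<x1} ratio \<and> strict_mono_on {x1<..} ratio"
      by (simp_all add: strict_mono_on_uminus_iff ereal_uminus_le_reorder ereal_uminus_less_reorder)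
  qed
qed

end
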